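(* Let $\ell, c \in \mathbb{N}$. For any directed graphs $G$ and $H$ with nodes $u$ and $v$ respectively, the following holds: $G,u \equiv_{\text{C}^2_{\ell, c}} H,v$ if and only if $W^\ell_c(u) = W^\ell_c(v)$.
   Context: A directed graph of dimension $d$ is $G=(V,E,\lambda)$ with finite node set $V$, edge set $E \subseteq V\times V$ without loops $(v,v)$, and labelling $\lambda: V \to \{0,1\}^d$. The in-neighbourhood $\overleftarrow{N}_G(v)$ is the set of $w$ with $(w,v)\in E$, the out-neighbourhood $\overrightarrow{N}_G(v)$ is the set of $w$ with $(v,w)\in E$, and $N_G(v)=\overleftarrow{N}_G(v)\cup\overrightarrow{N}_G(v)$. Graphs are viewed as first-order structures with unary predicates $P_1,\dots,P_d$ ($P_i$ holds at $v$ iff $\lambda(v)_i=1$) and binary predicate $E$. $\text{C}^2$ is the two-variable fragment of first-order logic with equality extended by counting quantifiers $\exists_k$ ("there exist at least $k$ distinct elements such that"). $\text{C}^2_{\ell,c}$ is the set of $\text{C}^2$ formulas of quantifier depth at most $\ell$ in which every counting quantifier $\exists_k$ has $k \le c$. $G,u \equiv_{\text{C}^2_{\ell,c}} H,v$ means that for every $\text{C}^2_{\ell,c}$ formula $\varphi(x)$ with one free variable, $G\models\varphi(u)$ iff $H\models\varphi(v)$. For a multiset $M$, the $c$-bounded multiset $\{\!\{\cdot\}\!\}^c$ is obtained by reducing every multiplicity to at most $c$ (e.g. $\{\!\{7,7,7,3\}\!\}^2=\{\!\{7,7,3\}\!\}$). The $c$-bounded WL algorithm computes, for all nodes $v$ of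 a graph $G$: $W^0_c(v)=\lambda(v)$ and $W^{\ell+1}_c(v) = \big( W^\ell_c(v),\ \{\!\{ W^\ell_c(w) \}\!\}^c_{w \in \overleftarrow{N}_G(v) \cap \overrightarrow{N}_G(v)},\ \{\!\{ W^\ell_c(w) \}\!\}^c_{w \in \overleftarrow{N}_G(v) \setminus \overrightarrow{N}_G(v)},\ \{\!\{ W^\ell_c(w) \}\!\}^c_{w \in \overrightarrow{N}_G(v) \setminus \overleftarrow{N}_G(v)},\ \{\!\{ W^\ell_c(w) \}\!\}^c_{w \in V \setminus (N_G(v) \cup \{v\})} \big)$. *)

theory Defs
  imports Main "HOL-Library.Multiset"
begin

record 'v digraph =
  nodes :: "'v set"
  edges :: "('v \<times> 'v) set"
  lab   :: "'v \<Rightarrow> bool list"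

text \<open>A directed graph of dimension d: finite node set, loop-free edges between nodes,
  labels in {0,1}^d (bool lists of length d; entry i is predicate P_(i+1)).\<close>
definition digraph_dim :: "nat \<Rightarrow> 'v digraph \<Rightarrow> bool" where
  "digraph_dim d G \<longleftrightarrow> finite (nodes G) \<and> edges G \<subseteq> nodes G \<times> nodes G
     \<and> (\<forall>v. (v, v) \<notin> edges G) \<and> (\<forall>v\<in>nodes G. length (lab G v) = d)"

definition in_nbhd :: "'v digraph \<Rightarrow> 'v \<Rightarrow> 'v set" where
  "in_nbhd G v = {w. (w, v) \<in> edges G}"

definition out_nbhd :: "'v digraph \<Rightarrow> 'v \<Rightarrow> 'v set" where
  "out_nbhd G v = {w. (v, w) \<in> edges G}"

definition nbhd :: "'v digraph \<Rightarrow> 'v \<Rightarrow> 'v set" where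
  "nbhd G v = in_nbhd G v \<union> out_nbhd G v"

datatype var = X | Y

datatype fo =
    Pred nat var            (* Pred i z : P_(i+1)(z), 0-based index i *)
  | Edge var var
  | Eq var var
  | Neg fo
  | Conj fo fo
  | ExC nat var fo          (* ExC k z phi : exists at least k distinct z with phi *)

fun free :: "fo \<Rightarrow> var set" where
  "free (Pred i z) = {z}"
| "free (Edge z z') = {z, z'}"
| "free (Eq z z') = {z, z'}"
| "free (Neg \<phi>) = free \<phi>"
| "free (Conj \<phi> \<psi>) = free \<phi> \<union> free \<psi>"
| "free (ExC k z \<phi>) = free \<phi> - {z}"

fun qdepth :: "fo \<Rightarrow> nat" where
  "qdepth (Pred i z) = 0"
| "qdepth (Edge z z') = 0"
| "qdepth (Eq z z') = 0"
| "qdepth (Neg \<phi>) = qdepth \<phi>"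
| "qdepth (Conj \<phi> \<psi>) = max (qdepth \<phi>) (qdepth \<psi>)"
| "qdepth (ExC k z \<phi>) = Suc (qdepth \<phi>)"

fun counts_le :: "nat \<Rightarrow> fo \<Rightarrow> bool" where
  "counts_le c (ExC k z \<phi>) = (k \<le> c \<and> counts_le c \<phi>)"
| "counts_le c (Neg \<phi>) = counts_le c \<phi>"
| "counts_le c (Conj \<phi> \<psi>) = (counts_le c \<phi> \<and> counts_le c \<psi>)"
| "counts_le c _ = True"

fun preds_lt :: "nat \<Rightarrow> fo \<Rightarrow> bool" where
  "preds_lt d (Pred i z) = (i < d)"
| "preds_lt d (ExC k z \<phi>) = preds_lt d \<phi>"
| "preds_lt d (Neg \<phi>) = preds_lt d \<phi>"
| "preds_lt d (Conj \<phi> \<psi>) = (preds_lt d \<phi> \<and> preds_lt d \<psi>)"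
| "preds_lt d _ = True"

definition C2 :: "nat \<Rightarrow> nat \<Rightarrow> nat \<Rightarrow> fo set" where
  "C2 d l c = {\<phi>. preds_lt d \<phi> \<and> qdepth \<phi> \<le> l \<and> counts_le c \<phi>}"

fun sat :: "'v digraph \<Rightarrow> (var \<Rightarrow> 'v) \<Rightarrow> fo \<Rightarrow> bool" where
  "sat G a (Pred i z) = (i < length (lab G (a z)) \<and> lab G (a z) ! i)"
| "sat G a (Edge z z') = ((a z, a z') \<in> edges G)"
| "sat G a (Eq z z') = (a z = a z')"
| "sat G a (Neg \<phi>) = (\<not> sat G a \<phi>)"
| "sat G a (Conj \<phi> \<psi>) = (sat G a \<phi> \<and> sat G a \<psi>)"
| "sat G a (ExC k z \<phi>) = (k \<le> card {w \<in> nodes G. sat G (a(z := w)) \<phi>})"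

definition C2_equiv :: "nat \<Rightarrow> nat \<Rightarrow> nat \<Rightarrow> 'a digraph \<Rightarrow> 'a \<Rightarrow> 'b digraph \<Rightarrow> 'b \<Rightarrow> bool" where
  "C2_equiv d l c G u H v \<longleftrightarrow>
     (\<forall>\<phi> \<in> C2 d l c. free \<phi> \<subseteq> {X} \<longrightarrow> (sat G (\<lambda>_. u) \<phi> \<longleftrightarrow> sat H (\<lambda>_. v) \<phi>))"

definition bound_mset :: "nat \<Rightarrow> 'a multiset \<Rightarrow> 'a multiset" where
  "bound_mset c M = (\<Sum>x\<in>set_mset M. replicate_mset (min c (count M x)) x)"

datatype color = Init "bool list" | Refine color "color multiset" "color multiset" "color multiset" "color multiset"

fun wl :: "nat \<Rightarrow> 'v digraph \<Rightarrow> nat \<Rightarrow> 'v \<Rightarrow> color" where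
  "wl c G 0 v = Init (lab G v)"
| "wl c G (Suc l) v = Refine (wl c G l v)
     (bound_mset c (image_mset (wl c G l) (mset_set (in_nbhd G v \<inter> out_nbhd G v))))
     (bound_mset c (image_mset (wl c G l) (mset_set (in_nbhd G v - out_nbhd G v))))
     (bound_mset c (image_mset (wl c G l) (mset_set (out_nbhd G v - in_nbhd G v))))
     (bound_mset c (image_mset (wl c G l) (mset_set (nodes G - (nbhd G v \<union> {v})))))"

end

theory Submission
  imports Defs
begin

(* Soundness: by induction on formulas, assignments whose values have equal depth-l colours and
   equal atomic types satisfy the same formulas of quantifier depth at most l. For a counting
   quantifier, classify the candidate witnesses by their atomic type relative to the fixed node
   together with their depth-l colour. In a loop-free graph the atomic types relative to x cut
   the nodes into {x} and the four regions of the WL update, so the depth-(l+1) colour of x fixes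
   the size of every class up to c, which is all a quantifier with k <= c can see.
   Completeness: every depth-l colour is defined by a C^2_{l,c} formula in one free variable. At
   depth l+1 it asserts the previous colour and, for each region, the c-bounded multiset of
   colours there, by "at least m" and "not at least m+1" quantifiers over the other variable. *)

section \<open>Bounded multisets\<close>

lemma count_bound_mset: "count (bound_mset c M) x = min c (count M x)"
proof -
  have "count (bound_mset c M) x = (\<Sum>y\<in>set_mset M. count (replicate_mset (min c (count M y)) y) x)"
    unfolding bound_mset_def by (simp add: count_sum)
  also have "\<dots> = (\<Sum>y\<in>set_mset M. if y = x then min c (count M x) else 0)"
    by (rule sum.cong) auto
  also have "\<dots> = min c (count M x)"
    by (cases "x \<in># M") (auto simp: not_in_iff)
  finally show ?thesis .
qed

lemma bound_mset_idem: "bound_mset c (bound_mset c M) = bound_mset c M"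
  by (simp add: multiset_eq_iff count_bound_mset)

lemma set_mset_bound_mset:
  assumes "c \<noteq> 0"
  shows "set_mset (bound_mset c M) = set_mset M"
proof (rule set_eqI)
  show "x \<in># bound_mset c M \<longleftrightarrow> x \<in># M" for x
    unfolding count_greater_zero_iff[symmetric] count_bound_mset using assms by simp
qed

lemma bound_mset_eq_iff:
  assumes "c \<noteq> 0" and "bound_mset c M = M"
  shows "bound_mset c N = M \<longleftrightarrow>
    (\<forall>x\<in>#M. min c (count N x) = count M x) \<and> set_mset N \<subseteq> set_mset M"
proof -
  have "min c (count N x) = count M x \<longleftrightarrow>
      (x \<in># M \<longrightarrow> min c (count N x) = count M x) \<and> (x \<in># N \<longrightarrow> x \<in># M)" for x
    using assms(1) by (auto simp: min_def simp flip: count_greater_zero_iff)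
  then show ?thesis
    by (auto simp: multiset_eq_iff count_bound_mset)
qed

lemma count_image_mset_mset_set:
  "finite A \<Longrightarrow> count (image_mset f (mset_set A)) x = card {a \<in> A. f a = x}"
  by (simp add: count_image_mset Collect_conj_eq Int_commute vimage_def)

lemma min_sum_min:
  fixes g :: "'x \<Rightarrow> nat"
  assumes "finite S"
  shows "min c (sum g S) = min c (\<Sum>s\<in>S. min c (g s))"
  using assms by (induction S rule: finite_induct) (simp_all add: min_def split: if_splits)

lemma le_iff_le_if_min_eq:
  fixes k c m n :: nat
  shows "min c m = min c n \<Longrightarrow> k \<le> c \<Longrightarrow> k \<le> m \<longleftrightarrow> k \<le> n"
  by (simp add: min_def split: if_splits)

lemma min_eq_iff_bounds:
  fixes c m n :: nat
  shows "m \<le> c \<Longrightarrow> min c n = m \<longleftrightarrow> m \<le> n \<and> (m < c \<longrightarrow> \<not> Suc m \<le> n)"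
  by (auto simp: min_def)

lemma card_eq_sum_card_classes:
  assumes "finite A" and "finite S" and "\<And>x. x \<in> A \<Longrightarrow> R x \<longleftrightarrow> h x \<in> S"
  shows "card {x \<in> A. R x} = (\<Sum>k\<in>S. card {x \<in> A. h x = k})"
proof -
  have "{x \<in> A. R x} = (\<Union>k\<in>S. {x \<in> A. h x = k})" using assms(3) by auto
  then show ?thesis
    using card_UN_disjoint[of S "\<lambda>k. {x \<in> A. h x = k}"] assms(1,2) by auto
qed

lemma min_card_eq_if_bound_mset_image_eq:
  fixes f :: "'a \<Rightarrow> 'k" and g :: "'b \<Rightarrow> 'k"
  assumes fin: "finite A" "finite B" and "c \<noteq> 0"
    and eq: "bound_mset c (image_mset f (mset_set A)) = bound_mset c (image_mset g (mset_set B))"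
    and PQ: "\<And>a b. a \<in> A \<Longrightarrow> b \<in> B \<Longrightarrow> f a = g b \<Longrightarrow> P a \<longleftrightarrow> Q b"
  shows "min c (card {a \<in> A. P a}) = min c (card {b \<in> B. Q b})"
proof -
  have img: "f ` A = g ` B"
    using arg_cong[OF eq, of set_mset] fin by (simp add: set_mset_bound_mset[OF \<open>c \<noteq> 0\<close>])
  define S where "S = f ` {a \<in> A. P a}"
  have PS: "P a \<longleftrightarrow> f a \<in> S" if a: "a \<in> A" for a
  proof
    assume "f a \<in> S"
    then obtain a1 where a1: "a1 \<in> A" "P a1" "f a = f a1" unfolding S_def by (auto elim!: imageE)
    have "f a \<in> g ` B" unfolding img[symmetric] using a by (rule imageI)
    then obtain b where b: "f a = g b" "b \<in> B" by (rule imageE)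
    have "P a1 \<longleftrightarrow> Q b" using a1(3) b(1) by (intro PQ[OF a1(1) b(2)]) simp
    moreover have "P a \<longleftrightarrow> Q b" by (rule PQ[OF a b(2) b(1)])
    ultimately show "P a" using a1(2) by simp
  next
    assume "P a"
    with a show "f a \<in> S" unfolding S_def by simp
  qed
  have QS: "Q b \<longleftrightarrow> g b \<in> S" if b: "b \<in> B" for b
  proof -
    have "g b \<in> f ` A" unfolding img using b by (rule imageI)
    then obtain a where a: "g b = f a" "a \<in> A" by (rule imageE)
    have "P a \<longleftrightarrow> Q b" by (rule PQ[OF a(2) b a(1)[symmetric]])
    then show ?thesis using PS[OF a(2)] a(1) by simp
  qed
  have class_eq: "min c (card {a \<in> A. f a = k}) = min c (card {b \<in> B. g b = k})" for k
    using arg_cong[OF eq, of "\<lambda>M. count M k"] fin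
    by (simp add: count_bound_mset count_image_mset_mset_set)
  have S: "finite S" unfolding S_def using fin by simp
  have "card {a \<in> A. P a} = (\<Sum>k\<in>S. card {a \<in> A. f a = k})"
    using fin(1) S PS by (rule card_eq_sum_card_classes)
  then have "min c (card {a \<in> A. P a}) = min c (\<Sum>k\<in>S. min c (card {a \<in> A. f a = k}))"
    using min_sum_min[OF S] by simp
  also have "\<dots> = min c (\<Sum>k\<in>S. min c (card {b \<in> B. g b = k}))"
    by (simp only: class_eq)
  also have "\<dots> = min c (card {b \<in> B. Q b})"
    using card_eq_sum_card_classes[OF fin(2) S QS] min_sum_min[OF S] by simp
  finally show ?thesis .
qed

section \<open>Atomic types and the regions of the WL update\<close>

definition pair_type :: "'v digraph \<Rightarrow> 'v \<Rightarrow> 'v \<Rightarrow> bool \<times> bool \<times> bool" where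
  "pair_type G p q = (p = q, (p, q) \<in> edges G, (q, p) \<in> edges G)"

definition type_region :: "'v digraph \<Rightarrow> 'v \<Rightarrow> bool \<times> bool \<times> bool \<Rightarrow> 'v set" where
  "type_region G x t = {w \<in> nodes G. pair_type G x w = t}"

lemma pair_type_swap: "pair_type G p q = pair_type H p' q' \<Longrightarrow> pair_type G q p = pair_type H q' p'"
  by (auto simp: pair_type_def)

lemma pair_type_self: "digraph_dim d G \<Longrightarrow> pair_type G p p = (True, False, False)"
  by (simp add: pair_type_def digraph_dim_def)

lemma type_region_eq:
  assumes "digraph_dim d G" and "x \<in> nodes G"
  shows "type_region G x (True, False, False) = {x}"
    and "type_region G x (False, True, True) = in_nbhd G x \<inter> out_nbhd G x"
    and "type_region G x (False, False, True) = in_nbhd G x - out_nbhd G x"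
    and "type_region G x (False, True, False) = out_nbhd G x - in_nbhd G x"
    and "type_region G x (False, False, False) = nodes G - (nbhd G x \<union> {x})"
    and "fw \<or> bw \<Longrightarrow> type_region G x (True, fw, bw) = {}"
  using assms
  by (auto simp: type_region_def pair_type_def digraph_dim_def in_nbhd_def out_nbhd_def nbhd_def)

lemma wl_Suc_eq_imp_bound_mset_type_region_eq:
  assumes "digraph_dim d G" "digraph_dim d H" "x \<in> nodes G" "y \<in> nodes H"
    and "wl c G (Suc l) x = wl c H (Suc l) y"
  shows "bound_mset c (image_mset (wl c G l) (mset_set (type_region G x t)))
       = bound_mset c (image_mset (wl c H l) (mset_set (type_region H y t)))"
proof -
  obtain e fw bw where "t = (e, fw, bw)" by (cases t)
  then show ?thesis
    using assms by (cases e; cases fw; cases bw) (simp_all add: type_region_eq)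
qed

lemma count_image_pair_type:
  assumes "finite (nodes G)"
  shows "count (image_mset (\<lambda>w. (pair_type G x w, f w)) (mset_set (nodes G))) (t, k)
       = count (image_mset f (mset_set (type_region G x t))) k"
proof -
  have "{w \<in> nodes G. (pair_type G x w, f w) = (t, k)} = {w \<in> type_region G x t. f w = k}"
    by (auto simp: type_region_def)
  moreover have "finite (type_region G x t)" using assms by (simp add: type_region_def)
  ultimately show ?thesis using assms by (simp only: count_image_mset_mset_set)
qed

lemma min_card_eq_if_wl_Suc_eq:
  assumes dG: "digraph_dim d G" and dH: "digraph_dim d H" and "x \<in> nodes G" "y \<in> nodes H"
    and "wl c G (Suc l) x = wl c H (Suc l) y"
    and PQ: "\<And>w w'. w \<in> nodes G \<Longrightarrow> w' \<in> nodes H \<Longrightarrow> wl c G l w = wl c H l w'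
      \<Longrightarrow> pair_type G x w = pair_type H y w' \<Longrightarrow> P w \<longleftrightarrow> Q w'"
  shows "min c (card {w \<in> nodes G. P w}) = min c (card {w \<in> nodes H. Q w})"
proof (cases "c = 0")
  case False
  have fin: "finite (nodes G)" "finite (nodes H)" using dG dH by (simp_all add: digraph_dim_def)
  let ?MG = "image_mset (\<lambda>w. (pair_type G x w, wl c G l w)) (mset_set (nodes G))"
  let ?MH = "image_mset (\<lambda>w. (pair_type H y w, wl c H l w)) (mset_set (nodes H))"
  have "bound_mset c ?MG = bound_mset c ?MH"
    unfolding multiset_eq_iff count_bound_mset
  proof
    fix tk
    show "min c (count ?MG tk) = min c (count ?MH tk)"
      using wl_Suc_eq_imp_bound_mset_type_region_eq[OF assms(1-5), of "fst tk"] fin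
      by (cases tk) (simp add: count_image_pair_type multiset_eq_iff count_bound_mset)
  qed
  then show ?thesis
    by (rule min_card_eq_if_bound_mset_image_eq[OF fin False]) (metis PQ prod.inject)
qed simp

section \<open>Invariance of formulas under equal colours\<close>

lemma wl_eq_imp_lab_eq: "wl c G l u = wl c H l v \<Longrightarrow> lab G u = lab H v"
  by (induction l) auto

fun other :: "var \<Rightarrow> var" where
  "other X = Y"
| "other Y = X"

lemma other_neq [simp]: "other z \<noteq> z" "z \<noteq> other z"
  by (cases z; simp)+

lemma sat_eq_if_wl_eq:
  assumes dG: "digraph_dim d G" and dH: "digraph_dim d H"
    and "\<forall>z. a z \<in> nodes G" "\<forall>z. b z \<in> nodes H" "qdepth \<phi> \<le> l" "counts_le c \<phi>"
    and "\<forall>z. wl c G l (a z) = wl c H l (b z)"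
    and "\<forall>z z'. pair_type G (a z) (a z') = pair_type H (b z) (b z')"
  shows "sat G a \<phi> \<longleftrightarrow> sat H b \<phi>"
  using assms(3-)
proof (induction \<phi> arbitrary: l a b)
  case (Pred i z)
  have "lab G (a z) = lab H (b z)"
    using Pred.prems(5) by (blast intro: wl_eq_imp_lab_eq)
  then show ?case by simp
next
  case (Edge z z')
  then show ?case by (auto simp: pair_type_def)
next
  case (Eq z z')
  then show ?case by (auto simp: pair_type_def)
next
  case (Conj \<phi> \<psi>)
  then show ?case by auto
next
  case (ExC k z \<phi>)
  obtain l' where l: "l = Suc l'" and "qdepth \<phi> \<le> l'" using ExC.prems(3) by (cases l) auto
  have "min c (card {w \<in> nodes G. sat G (a(z := w)) \<phi>})
      = min c (card {w \<in> nodes H. sat H (b(z := w)) \<phi>})"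
  proof (rule min_card_eq_if_wl_Suc_eq[OF dG dH])
    show "a (other z) \<in> nodes G" "b (other z) \<in> nodes H"
      "wl c G (Suc l') (a (other z)) = wl c H (Suc l') (b (other z))"
      using ExC.prems(1,2,5) l by simp_all
    fix w w' assume w: "w \<in> nodes G" "w' \<in> nodes H" "wl c G l' w = wl c H l' w'"
      and t: "pair_type G (a (other z)) w = pair_type H (b (other z)) w'"
    have "pair_type G ((a(z := w)) v) ((a(z := w)) v') = pair_type H ((b(z := w')) v) ((b(z := w')) v')"
      for v v'
      using t pair_type_swap[OF t] pair_type_self[OF dG] pair_type_self[OF dH] ExC.prems(6)
      by (cases z; cases v; cases v') auto
    then show "sat G (a(z := w)) \<phi> \<longleftrightarrow> sat H (b(z := w')) \<phi>"
      by (intro ExC.IH[where l = l']) (use ExC.prems w \<open>qdepth \<phi> \<le> l'\<close> l in auto)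
  qed
  moreover have "k \<le> c" using ExC.prems(4) by simp
  ultimately show ?case
    unfolding sat.simps by (rule le_iff_le_if_min_eq)
qed simp

section \<open>Characteristic formulas of colours\<close>

definition TT :: "var \<Rightarrow> fo" where
  "TT z = Eq z z"

definition FF :: "var \<Rightarrow> fo" where
  "FF z = Neg (TT z)"

definition lit :: "bool \<Rightarrow> fo \<Rightarrow> fo" where
  "lit b \<phi> = (if b then \<phi> else Neg \<phi>)"

definition conj_list :: "var \<Rightarrow> fo list \<Rightarrow> fo" where
  "conj_list z \<phi>s = foldr Conj \<phi>s (TT z)"

definition disj_list :: "var \<Rightarrow> fo list \<Rightarrow> fo" where
  "disj_list z \<phi>s = Neg (conj_list z (map Neg \<phi>s))"

definition support_list :: "'x multiset \<Rightarrow> 'x list" where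
  "support_list M = (SOME xs. set xs = set_mset M)"

definition pair_type_fo :: "bool \<times> bool \<times> bool \<Rightarrow> var \<Rightarrow> var \<Rightarrow> fo" where
  "pair_type_fo t z z' = (case t of (e, fw, bw) \<Rightarrow>
     Conj (lit e (Eq z z')) (Conj (lit fw (Edge z z')) (lit bw (Edge z' z))))"

(* Only an M with bound_mset c M = M is the c-bounding of a multiset; for c = 0 that means M = {#},
   a case needing its own formula because ExC 1 exceeds the bound. *)
definition bounded_mset_fo :: "nat \<Rightarrow> var \<Rightarrow> fo \<Rightarrow> (color \<Rightarrow> fo) \<Rightarrow> color multiset \<Rightarrow> fo" where
  "bounded_mset_fo c z r ch M =
    (if bound_mset c M \<noteq> M then FF z
     else if c = 0 then TT z
     else let z' = other z; at_least = (\<lambda>k col. ExC k z' (Conj r (ch col))) in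
       Conj (conj_list z (map (\<lambda>col. Conj (at_least (count M col) col)
                (if count M col < c then Neg (at_least (Suc (count M col)) col) else TT z))
              (support_list M)))
         (Neg (ExC 1 z' (Conj r (Neg (disj_list z' (map ch (support_list M))))))))"

(* The four regions of the WL update are the type regions (False, True, True), (False, False, True),
   (False, True, False) and (False, False, False) around z, in this order (see type_region_eq). *)
fun wl_fo :: "nat \<Rightarrow> nat \<Rightarrow> nat \<Rightarrow> var \<Rightarrow> color \<Rightarrow> fo" where
  "wl_fo d c 0 z (Init bs) =
     (if length bs = d then conj_list z (map (\<lambda>i. lit (bs ! i) (Pred i z)) [0..<d]) else FF z)"
| "wl_fo d c (Suc l) z (Refine k M1 M2 M3 M4) =
     conj_list z (wl_fo d c l z k #
       map2 (\<lambda>t. bounded_mset_fo c z (pair_type_fo t z (other z)) (wl_fo d c l (other z)))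
         [(False, True, True), (False, False, True), (False, True, False), (False, False, False)]
         [M1, M2, M3, M4])"
| "wl_fo d c l z k = FF z"

lemma sat_TT [simp]: "sat G a (TT z)"
  and sat_FF [simp]: "\<not> sat G a (FF z)"
  by (simp_all add: TT_def FF_def)

lemma sat_lit [simp]: "sat G a (lit b \<phi>) \<longleftrightarrow> (sat G a \<phi> \<longleftrightarrow> b)"
  by (simp add: lit_def)

lemma sat_conj_list [simp]: "sat G a (conj_list z \<phi>s) \<longleftrightarrow> (\<forall>\<phi>\<in>set \<phi>s. sat G a \<phi>)"
  by (induction \<phi>s) (simp_all add: conj_list_def)

lemma sat_disj_list [simp]: "sat G a (disj_list z \<phi>s) \<longleftrightarrow> (\<exists>\<phi>\<in>set \<phi>s. sat G a \<phi>)"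
  by (simp add: disj_list_def)

lemma set_support_list [simp]: "set (support_list M) = set_mset M"
  unfolding support_list_def by (rule someI_ex) (simp add: finite_list)

lemma sat_pair_type_fo [simp]: "sat G a (pair_type_fo t z z') \<longleftrightarrow> pair_type G (a z) (a z') = t"
  by (cases t) (auto simp: pair_type_fo_def pair_type_def)

lemma sat_bounded_mset_fo:
  assumes "finite R" and "R \<subseteq> nodes G"
    and r: "\<And>w. w \<in> nodes G \<Longrightarrow> sat G (a(other z := w)) r \<longleftrightarrow> w \<in> R"
    and ch: "\<And>w k. w \<in> nodes G \<Longrightarrow> sat G (a(other z := w)) (ch k) \<longleftrightarrow> f w = k"
  shows "sat G a (bounded_mset_fo c z r ch M) \<longleftrightarrow> bound_mset c (image_mset f (mset_set R)) = M"
proof -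
  define N where "N = image_mset f (mset_set R)"
  have at_least: "sat G a (ExC m (other z) (Conj r (ch k))) \<longleftrightarrow> m \<le> count N k" for m k
  proof -
    have "{w \<in> nodes G. sat G (a(other z := w)) (Conj r (ch k))} = {w \<in> R. f w = k}"
      using assms by auto
    then show ?thesis by (simp add: N_def count_image_mset_mset_set \<open>finite R\<close>)
  qed
  have outside: "sat G a (ExC 1 (other z) (Conj r (Neg (disj_list (other z) (map ch (support_list M))))))
      \<longleftrightarrow> \<not> set_mset N \<subseteq> set_mset M"
  proof -
    have "{w \<in> nodes G. sat G (a(other z := w))
        (Conj r (Neg (disj_list (other z) (map ch (support_list M)))))} = {w \<in> R. f w \<notin># M}"
      using assms by auto
    then show ?thesis by (auto simp: N_def \<open>finite R\<close> Suc_le_eq card_gt_0_iff)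
  qed
  consider "bound_mset c M \<noteq> M" | "bound_mset c M = M" "c = 0" | "bound_mset c M = M" "c \<noteq> 0"
    by blast
  then show ?thesis
  proof cases
    case 1
    then have "bound_mset c N \<noteq> M" by (metis bound_mset_idem)
    with 1 show ?thesis by (simp add: bounded_mset_fo_def N_def)
  next
    case 2
    then have "M = {#}" by (simp add: multiset_eq_iff count_bound_mset)
    with 2 show ?thesis by (simp add: bounded_mset_fo_def N_def multiset_eq_iff count_bound_mset)
  next
    case 3
    have count_le: "count M k \<le> c" for k
      using arg_cong[OF 3(1), of "\<lambda>M. count M k"] by (simp add: count_bound_mset)
    have "sat G a (bounded_mset_fo c z r ch M) \<longleftrightarrow>
        (\<forall>k\<in>#M. count M k \<le> count N k \<and> (count M k < c \<longrightarrow> \<not> Suc (count M k) \<le> count N k))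
        \<and> set_mset N \<subseteq> set_mset M"
      using 3 by (simp add: bounded_mset_fo_def Let_def at_least outside del: sat.simps(6) One_nat_def) blast
    also have "\<dots> \<longleftrightarrow> (\<forall>k\<in>#M. min c (count N k) = count M k) \<and> set_mset N \<subseteq> set_mset M"
      using count_le by (simp add: min_eq_iff_bounds)
    also have "\<dots> \<longleftrightarrow> bound_mset c N = M"
      using bound_mset_eq_iff[OF 3(2,1)] by simp
    finally show ?thesis by (simp add: N_def)
  qed
qed

lemma sat_wl_fo:
  assumes dG: "digraph_dim d G" and "a z \<in> nodes G"
  shows "sat G a (wl_fo d c l z k) \<longleftrightarrow> wl c G l (a z) = k"
  using assms(2)
proof (induction l arbitrary: z k a)
  case 0
  have len: "length (lab G (a z)) = d" using dG 0 by (simp add: digraph_dim_def)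
  show ?case
  proof (cases k)
    case (Init bs)
    show ?thesis
    proof (cases "length bs = d")
      case True
      have "sat G a (wl_fo d c 0 z k) \<longleftrightarrow> (\<forall>i<d. lab G (a z) ! i = bs ! i)"
        using Init True len by auto
      also have "\<dots> \<longleftrightarrow> lab G (a z) = bs"
        using len True by (simp add: list_eq_iff_nth_eq)
      finally show ?thesis using Init by simp
    qed (use Init len in auto)
  qed simp
next
  case (Suc l)
  show ?case
  proof (cases k)
    case (Refine k0 M1 M2 M3 M4)
    have IH: "sat G (a(other z := w)) (wl_fo d c l (other z) k') \<longleftrightarrow> wl c G l w = k'"
      if "w \<in> nodes G" for w k'
    proof -
      have "(a(other z := w)) (other z) \<in> nodes G" using that by simp
      from Suc.IH[where a = "a(other z := w)" and z = "other z", OF this] show ?thesis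
        by (simp add: fun_upd_def)
    qed
    have region: "sat G a (bounded_mset_fo c z (pair_type_fo t z (other z)) (wl_fo d c l (other z)) M)
        \<longleftrightarrow> bound_mset c (image_mset (wl c G l) (mset_set (type_region G (a z) t))) = M" for t M
    proof (rule sat_bounded_mset_fo)
      show "finite (type_region G (a z) t)"
        using dG by (simp add: type_region_def digraph_dim_def)
    qed (auto simp: IH type_region_def)
    show ?thesis
      using Refine Suc.IH[of a z k0] Suc.prems
      by (simp add: region type_region_eq[OF dG Suc.prems])
  qed simp
qed

definition C2_formula :: "nat \<Rightarrow> nat \<Rightarrow> nat \<Rightarrow> var set \<Rightarrow> fo \<Rightarrow> bool" where
  "C2_formula d l c S \<phi> \<longleftrightarrow> \<phi> \<in> C2 d l c \<and> free \<phi> \<subseteq> S"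

lemma C2_formula_simps [simp]:
  "C2_formula d l c S (Conj \<phi> \<psi>) \<longleftrightarrow> C2_formula d l c S \<phi> \<and> C2_formula d l c S \<psi>"
  "C2_formula d l c S (Neg \<phi>) \<longleftrightarrow> C2_formula d l c S \<phi>"
  "C2_formula d l c S (lit b \<phi>) \<longleftrightarrow> C2_formula d l c S \<phi>"
  "C2_formula d l c S (Eq z z') \<longleftrightarrow> z \<in> S \<and> z' \<in> S"
  "C2_formula d l c S (Edge z z') \<longleftrightarrow> z \<in> S \<and> z' \<in> S"
  "C2_formula d l c S (Pred i z) \<longleftrightarrow> i < d \<and> z \<in> S"
  "C2_formula d l c S (TT z) \<longleftrightarrow> z \<in> S"
  "C2_formula d l c S (FF z) \<longleftrightarrow> z \<in> S"
  by (auto simp: C2_formula_def C2_def lit_def TT_def FF_def)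

lemma C2_formula_ExC:
  "k \<le> c \<Longrightarrow> C2_formula d l c (insert z S) \<phi> \<Longrightarrow> C2_formula d (Suc l) c S (ExC k z \<phi>)"
  by (auto simp: C2_formula_def C2_def)

lemma C2_formula_mono:
  "C2_formula d l c S \<phi> \<Longrightarrow> l \<le> l' \<Longrightarrow> S \<subseteq> S' \<Longrightarrow> C2_formula d l' c S' \<phi>"
  by (auto simp: C2_formula_def C2_def)

lemma C2_formula_conj_list:
  "z \<in> S \<Longrightarrow> \<forall>\<phi>\<in>set \<phi>s. C2_formula d l c S \<phi> \<Longrightarrow> C2_formula d l c S (conj_list z \<phi>s)"
  by (induction \<phi>s) (simp_all add: conj_list_def)

lemma C2_formula_disj_list:
  "z \<in> S \<Longrightarrow> \<forall>\<phi>\<in>set \<phi>s. C2_formula d l c S \<phi> \<Longrightarrow> C2_formula d l c S (disj_list z \<phi>s)"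
  by (simp add: disj_list_def C2_formula_conj_list)

lemma C2_formula_pair_type_fo:
  "z \<in> S \<Longrightarrow> z' \<in> S \<Longrightarrow> C2_formula d l c S (pair_type_fo t z z')"
  by (cases t) (simp add: pair_type_fo_def)

lemma C2_formula_bounded_mset_fo:
  assumes r: "C2_formula d l c {z, other z} r" and ch: "\<And>k. C2_formula d l c {other z} (ch k)"
  shows "C2_formula d (Suc l) c {z} (bounded_mset_fo c z r ch M)"
proof (cases "bound_mset c M = M \<and> c \<noteq> 0")
  case True
  have count_le: "count M k \<le> c" for k
    using arg_cong[OF conjunct1[OF True], of "\<lambda>M. count M k"] by (simp add: count_bound_mset)
  have ch': "C2_formula d l c (insert (other z) {z}) (ch k)" for k
    by (rule C2_formula_mono[OF ch]) auto
  have r': "C2_formula d l c (insert (other z) {z}) r"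
    using r by (simp add: insert_commute)
  have at_least: "C2_formula d (Suc l) c {z} (ExC k (other z) (Conj r (ch col)))" if "k \<le> c" for k col
    using that ch' r' by (simp add: C2_formula_ExC)
  have outside: "C2_formula d (Suc l) c {z}
      (ExC 1 (other z) (Conj r (Neg (disj_list (other z) (map ch (support_list M))))))"
    using True ch' r' by (simp add: C2_formula_ExC C2_formula_disj_list)
  have "C2_formula d (Suc l) c {z} (conj_list z (map (\<lambda>col.
      Conj (ExC (count M col) (other z) (Conj r (ch col)))
        (if count M col < c then Neg (ExC (Suc (count M col)) (other z) (Conj r (ch col))) else TT z))
      (support_list M)))"
    by (rule C2_formula_conj_list) (simp_all add: at_least count_le Suc_le_eq)
  with outside True show ?thesis
    by (simp add: bounded_mset_fo_def Let_def)
qed (auto simp: bounded_mset_fo_def)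

lemma C2_formula_wl_fo: "C2_formula d l c {z} (wl_fo d c l z k)"
proof (induction l arbitrary: z k)
  case 0
  show ?case by (cases k) (simp_all add: C2_formula_conj_list)
next
  case (Suc l)
  show ?case
  proof (cases k)
    case (Refine k0 M1 M2 M3 M4)
    have "C2_formula d (Suc l) c {z}
        (bounded_mset_fo c z (pair_type_fo t z (other z)) (wl_fo d c l (other z)) M)" for t M
      by (rule C2_formula_bounded_mset_fo) (simp_all add: C2_formula_pair_type_fo Suc.IH)
    moreover have "C2_formula d (Suc l) c {z} (wl_fo d c l z k0)"
      by (rule C2_formula_mono[OF Suc.IH]) auto
    ultimately show ?thesis
      using Refine by (simp add: C2_formula_conj_list)
  qed simp
qed

theorem theorem1:
  fixes G :: "'a digraph" and H :: "'b digraph"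
  assumes "digraph_dim d G" and "digraph_dim d H"
    and "u \<in> nodes G" and "v \<in> nodes H"
  shows "C2_equiv d l c G u H v \<longleftrightarrow> wl c G l u = wl c H l v"
proof
  assume equiv: "C2_equiv d l c G u H v"
  let ?\<phi> = "wl_fo d c l X (wl c G l u)"
  have "sat G (\<lambda>_. u) ?\<phi>" using sat_wl_fo[OF assms(1)] assms(3) by simp
  then have "sat H (\<lambda>_. v) ?\<phi>"
    using equiv C2_formula_wl_fo unfolding C2_equiv_def C2_formula_def by blast
  then show "wl c G l u = wl c H l v" using sat_wl_fo[OF assms(2)] assms(4) by simp
next
  assume "wl c G l u = wl c H l v"
  then show "C2_equiv d l c G u H v"
    unfolding C2_equiv_def C2_def
    using sat_eq_if_wl_eq[OF assms(1,2), of "\<lambda>_. u" "\<lambda>_. v"] assms(3,4)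
      pair_type_self[OF assms(1)] pair_type_self[OF assms(2)]
    by auto
qed

end
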